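(* Let $\mathbf f=(f_1,\dots,f_n)$ be a strongly generic $n$-tuple with $R[\mathbf f]=R$. Assume $\mathbf g=(g_1,\dots,g_n)\in\mathcal G_{00}^n$ is such that for all $(i,j)\in R$, $g_i\to f_j$ and $f_i\to g_j$ in $\Gamma_{\mathcal G}$. For $(x_1,\dots,x_n)\in(0,1]^n$ let $h_i=x_if_i+(1-x_i)g_i$. Then $\mathbf h=(h_1,\dots,h_n)$ is strongly generic and $R[\mathbf h]=R$.
   Context: $\mathcal G$ is the group of strictly increasing continuous maps $f:[-1,1]\to[-1,1]$ with $f(\pm1)=\pm1$; $\mathcal G_0=\{f\in\mathcal G:\int_{-1}^1f=0\}$; $\mathcal G_{00}$ the odd elements of $\mathcal G$. $f^e(t)=\tfrac12(f(t)+f(-t))$; $Q(f,g)=\int_{-1}^1f(g^{-1}(t))\,dt$. The digraph $\Gamma_{\mathcal G}$: $f\to g$ iff $Q(g,f)>0$. $R[\mathbf f]$ is the digraph on $[n]$ with $(i,j)\in R[\mathbf f]$ iff $Q(f_j,f_i)>0$. $\mathbf f\in\mathcal G_0^n$ is strongly generic if $\{f_1^e,\dots,f_n^e\}$ is linearly independent and $Q(f_i,f_j)\ne0$ for all $i\ne j$. *)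

theory Defs
  imports "HOL-Analysis.Analysis"
begin

text \<open>The group G: strictly increasing continuous self-maps of [-1,1] fixing the endpoints.
  Functions are real => real; only their values on [-1,1] matter.\<close>
definition inG :: "(real \<Rightarrow> real) \<Rightarrow> bool" where
  "inG f \<longleftrightarrow> continuous_on {-1..1} f \<and> strict_mono_on {-1..1} f
     \<and> f (-1) = -1 \<and> f 1 = 1"

definition inG0 :: "(real \<Rightarrow> real) \<Rightarrow> bool" where
  "inG0 f \<longleftrightarrow> inG f \<and> integral {-1..1} f = 0"

definition inG00 :: "(real \<Rightarrow> real) \<Rightarrow> bool" where
  "inG00 f \<longleftrightarrow> inG f \<and> (\<forall>t\<in>{-1..1}. f (-t) = - f t)"

definition even_part :: "(real \<Rightarrow> real) \<Rightarrow> real \<Rightarrow> real" where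
  "even_part f = (\<lambda>t. (f t + f (-t)) / 2)"

definition Q :: "(real \<Rightarrow> real) \<Rightarrow> (real \<Rightarrow> real) \<Rightarrow> real" where
  "Q f g = integral {-1..1} (\<lambda>t. f (inv_into {-1..1} g t))"

definition arrow :: "(real \<Rightarrow> real) \<Rightarrow> (real \<Rightarrow> real) \<Rightarrow> bool" where
  "arrow f g \<longleftrightarrow> Q g f > 0"

definition lin_indep_fam :: "nat \<Rightarrow> (nat \<Rightarrow> real \<Rightarrow> real) \<Rightarrow> bool" where
  "lin_indep_fam n F \<longleftrightarrow>
     (\<forall>c :: nat \<Rightarrow> real. (\<forall>t\<in>{-1..1}. (\<Sum>i=1..n. c i * F i t) = 0) \<longrightarrow> (\<forall>i\<in>{1..n}. c i = 0))"

definition strongly_generic :: "nat \<Rightarrow> (nat \<Rightarrow> real \<Rightarrow> real) \<Rightarrow> bool" where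
  "strongly_generic n f \<longleftrightarrow>
     (\<forall>i\<in>{1..n}. inG0 (f i)) \<and>
     lin_indep_fam n (\<lambda>i. even_part (f i)) \<and>
     (\<forall>i\<in>{1..n}. \<forall>j\<in>{1..n}. i \<noteq> j \<longrightarrow> Q (f i) (f j) \<noteq> 0)"

definition Rel :: "nat \<Rightarrow> (nat \<Rightarrow> real \<Rightarrow> real) \<Rightarrow> (nat \<times> nat) set" where
  "Rel n f = {(i, j). i \<in> {1..n} \<and> j \<in> {1..n} \<and> Q (f j) (f i) > 0}"

end

theory Submission
  imports Defs
begin

text \<open>The function Q is antisymmetric on G: for \<open>\<phi> = u \<circ> w\<^sup>-\<^sup>1\<close> one has
  \<open>Q(u,w) + Q(w,u) = \<integral>\<phi> + \<integral>\<phi>\<^sup>-\<^sup>1\<close>, and both integrals, shifted by 2, measure the part of the square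
  [-1,1]^2 below the graph of \<open>\<phi>\<close>, slicing it vertically and horizontally; so the sum is 0.
  Q is linear in its first argument, hence by antisymmetry affine in its second argument along
  convex combinations, and it vanishes on pairs of odd maps. Expanding \<open>Q(h\<^sub>j,h\<^sub>i)\<close> bilinearly,
  the \<open>(g\<^sub>j,g\<^sub>i)\<close> term drops out and the others are positive for every edge (i,j) of R, so
  \<open>R \<subseteq> R[h]\<close>. As R is a tournament and R[h] is asymmetric, R[h] = R, which also gives
  \<open>Q(h\<^sub>i,h\<^sub>j) \<noteq> 0\<close>. Oddness of \<open>g\<^sub>i\<close> gives \<open>\<integral>h\<^sub>i = 0\<close> and \<open>h\<^sub>i\<^sup>e = x\<^sub>i f\<^sub>i\<^sup>e\<close>, so linear
  independence of the even parts survives.\<close>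

abbreviation ginv :: "(real \<Rightarrow> real) \<Rightarrow> real \<Rightarrow> real" where
  "ginv f \<equiv> inv_into {-1..1} f"

lemma inG_less_iff: "inG f \<Longrightarrow> x \<in> {-1..1} \<Longrightarrow> y \<in> {-1..1} \<Longrightarrow> f x < f y \<longleftrightarrow> x < y"
  unfolding inG_def by (metis strict_mono_on_less)

lemma inG_le_iff: "inG f \<Longrightarrow> x \<in> {-1..1} \<Longrightarrow> y \<in> {-1..1} \<Longrightarrow> f x \<le> f y \<longleftrightarrow> x \<le> y"
  by (meson inG_less_iff not_le)

lemma inG_bij_betw:
  assumes f: "inG f"
  shows "bij_betw f {-1..1} {-1..1}"
proof (rule bij_betw_imageI)
  show "inj_on f {-1..1}"
    using f unfolding inG_def by (meson strict_mono_on_imp_inj_on)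
  show "f ` {-1..1} = {-1..1}"
  proof
    show "f ` {-1..1} \<subseteq> {-1..1}"
      using f inG_le_iff[OF f, of "-1"] inG_le_iff[OF f, of _ 1] by (fastforce simp: inG_def)
    show "{-1..1} \<subseteq> f ` {-1..1}"
      using f IVT'[of f "-1" _ 1] by (force simp: inG_def)
  qed
qed

lemma inG_in_Icc: "inG f \<Longrightarrow> x \<in> {-1..1} \<Longrightarrow> f x \<in> {-1..1}"
  by (meson bij_betwE inG_bij_betw)

lemma ginv_in_Icc: "inG f \<Longrightarrow> y \<in> {-1..1} \<Longrightarrow> ginv f y \<in> {-1..1}"
  by (meson bij_betwE bij_betw_inv_into inG_bij_betw)

lemma inG_ginv_cancel: "inG f \<Longrightarrow> y \<in> {-1..1} \<Longrightarrow> f (ginv f y) = y"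
  by (meson bij_betw_inv_into_right inG_bij_betw)

lemma ginv_inG_cancel: "inG f \<Longrightarrow> x \<in> {-1..1} \<Longrightarrow> ginv f (f x) = x"
  by (meson bij_betw_inv_into_left inG_bij_betw)

lemma inG_ginv:
  assumes f: "inG f"
  shows "inG (ginv f)"
proof -
  have "continuous_on (f ` {-1..1}) (ginv f)"
    using f ginv_inG_cancel[OF f] by (intro continuous_on_inv) (auto simp: inG_def)
  moreover have "strict_mono_on {-1..1} (ginv f)"
    by (rule strict_mono_onI)
      (metis f ginv_in_Icc inG_less_iff inG_ginv_cancel)
  moreover have "ginv f (-1) = -1" "ginv f 1 = 1"
    using f ginv_inG_cancel[OF f, of "-1"] ginv_inG_cancel[OF f, of 1] by (auto simp: inG_def)
  ultimately show ?thesis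
    using bij_betw_imp_surj_on[OF inG_bij_betw[OF f]] by (simp add: inG_def)
qed

lemma inG_compose:
  assumes f: "inG f" and g: "inG g"
  shows "inG (\<lambda>t. f (g t))"
proof -
  have "continuous_on {-1..1} (\<lambda>t. f (g t))"
    using f g inG_in_Icc[OF g] unfolding inG_def
    by (metis continuous_on_compose2 image_subset_iff)
  moreover have "strict_mono_on {-1..1} (\<lambda>t. f (g t))"
    by (rule strict_mono_onI) (metis f g inG_in_Icc inG_less_iff)
  ultimately show ?thesis
    using f g by (simp add: inG_def)
qed

definition convex_comb :: "real \<Rightarrow> (real \<Rightarrow> real) \<Rightarrow> (real \<Rightarrow> real) \<Rightarrow> real \<Rightarrow> real" where
  "convex_comb a f g = (\<lambda>t. a * f t + (1 - a) * g t)"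

lemma inG_convex_comb:
  assumes f: "inG f" and g: "inG g" and a: "0 \<le> a" "a \<le> 1"
  shows "inG (convex_comb a f g)"
proof -
  have "continuous_on {-1..1} (convex_comb a f g)"
    using f g unfolding inG_def convex_comb_def by (intro continuous_intros) auto
  moreover have "strict_mono_on {-1..1} (convex_comb a f g)"
  proof (rule strict_mono_onI)
    fix r s :: real assume rs: "r \<in> {-1..1}" "s \<in> {-1..1}" "r < s"
    then have "f r < f s" "g r < g s" by (simp_all add: f g inG_less_iff)
    with a show "convex_comb a f g r < convex_comb a f g s"
      unfolding convex_comb_def
      by (smt (verit) mult_left_mono mult_strict_left_mono)
  qed
  ultimately show ?thesis
    using f g by (simp add: inG_def convex_comb_def algebra_simps)
qed

lemma integral_odd_function:
  fixes F :: "real \<Rightarrow> real"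
  assumes "\<And>t. t \<in> {-a..a} \<Longrightarrow> F (-t) = - F t"
  shows "integral {-a..a} F = 0"
proof -
  have "integral {-a..a} F = integral {-a..a} (\<lambda>t. F (-t))"
    using Henstock_Kurzweil_Integration.integral_reflect_real[of a "-a" F] by simp
  also have "\<dots> = integral {-a..a} (\<lambda>t. - F t)"
    by (rule integral_cong) (use assms in auto)
  also have "\<dots> = - integral {-a..a} F"
    by (rule integral_neg)
  finally show ?thesis by simp
qed

lemma closed_below_graph:
  fixes \<phi> :: "real \<Rightarrow> real"
  assumes "continuous_on S \<phi>" "closed S" "closed T"
  shows "closed {p \<in> S \<times> T. snd p \<le> \<phi> (fst p)}"
proof -
  have "continuous_on (S \<times> T) (\<lambda>p. \<phi> (fst p))"
    by (rule continuous_on_compose2[OF assms(1) continuous_on_fst[OF continuous_on_id]]) auto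
  then have "continuous_on (S \<times> T) (\<lambda>p. \<phi> (fst p) - snd p)"
    by (intro continuous_intros)
  then have "closed (S \<times> T \<inter> (\<lambda>p. \<phi> (fst p) - snd p) -` {0..})"
    using assms by (intro continuous_closed_preimage closed_Times) auto
  moreover have "{p \<in> S \<times> T. snd p \<le> \<phi> (fst p)} = S \<times> T \<inter> (\<lambda>p. \<phi> (fst p) - snd p) -` {0..}"
    by auto
  ultimately show ?thesis by simp
qed

definition subgraph :: "(real \<Rightarrow> real) \<Rightarrow> (real \<times> real) set" where
  "subgraph \<phi> = {p \<in> {-1..1} \<times> {-1..1}. snd p \<le> \<phi> (fst p)}"

lemma subgraph_in_sets:
  assumes "inG \<phi>"
  shows "subgraph \<phi> \<in> sets (lborel \<Otimes>\<^sub>M lborel)"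
proof -
  have "closed (subgraph \<phi>)"
    unfolding subgraph_def using assms by (intro closed_below_graph) (auto simp: inG_def)
  then show ?thesis
    by (metis borel_closed lborel_prod sets_lborel)
qed

lemma emeasure_subgraph_eq_integral:
  assumes \<phi>: "inG \<phi>"
  shows "emeasure (lborel \<Otimes>\<^sub>M lborel) (subgraph \<phi>) = ennreal (integral {-1..1} \<phi> + 2)"
proof -
  have "Pair t -` subgraph \<phi> = (if t \<in> {-1..1} then {-1..\<phi> t} else {})" for t
    using inG_in_Icc[OF \<phi>, of t] by (auto simp: subgraph_def)
  then have slice: "emeasure lborel (Pair t -` subgraph \<phi>) = ennreal (\<phi> t + 1) * indicator {-1..1} t" for t
    using inG_in_Icc[OF \<phi>, of t] by (simp add: indicator_def)
  have "continuous_on {-1..1} \<phi>"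
    using \<phi> by (simp add: inG_def)
  then have "((\<lambda>t. \<phi> t + 1) has_integral integral {-1..1} \<phi> + 2) {-1..1}"
    using has_integral_add[OF integrable_integral[OF integrable_continuous_real]
        has_integral_const_real[of "1::real" "-1" 1]] by simp
  then have "(\<integral>\<^sup>+t. ennreal (\<phi> t + 1) * indicator {-1..1} t \<partial>lborel) = ennreal (integral {-1..1} \<phi> + 2)"
    by (rule nn_integral_has_integral_lebesgue'[rotated]) (use inG_in_Icc[OF \<phi>] in fastforce)
  then show ?thesis
    by (simp add: lborel.emeasure_pair_measure_alt[OF subgraph_in_sets[OF \<phi>]] slice)
qed

lemma emeasure_subgraph_eq_integral_ginv:
  assumes \<phi>: "inG \<phi>"
  shows "emeasure (lborel \<Otimes>\<^sub>M lborel) (subgraph \<phi>) = ennreal (2 - integral {-1..1} (ginv \<phi>))"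
proof -
  have "y \<le> \<phi> t \<longleftrightarrow> ginv \<phi> y \<le> t" if "t \<in> {-1..1}" "y \<in> {-1..1}" for t y
    by (metis \<phi> that ginv_in_Icc inG_ginv_cancel inG_le_iff)
  then have "(\<lambda>t. (t, y)) -` subgraph \<phi> = (if y \<in> {-1..1} then {ginv \<phi> y..1} else {})" for y
    using ginv_in_Icc[OF \<phi>, of y] by (auto simp: subgraph_def)
  then have slice:
    "emeasure lborel ((\<lambda>t. (t, y)) -` subgraph \<phi>) = ennreal (1 - ginv \<phi> y) * indicator {-1..1} y" for y
    using ginv_in_Icc[OF \<phi>, of y] by (simp add: indicator_def)
  have "continuous_on {-1..1} (ginv \<phi>)"
    using inG_ginv[OF \<phi>] by (simp add: inG_def)
  then have "((\<lambda>y. 1 - ginv \<phi> y) has_integral 2 - integral {-1..1} (ginv \<phi>)) {-1..1}"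
    using has_integral_diff[OF has_integral_const_real[of "1::real" "-1" 1]
        integrable_integral[OF integrable_continuous_real]] by simp
  then have "(\<integral>\<^sup>+y. ennreal (1 - ginv \<phi> y) * indicator {-1..1} y \<partial>lborel)
      = ennreal (2 - integral {-1..1} (ginv \<phi>))"
    by (rule nn_integral_has_integral_lebesgue'[rotated]) (use ginv_in_Icc[OF \<phi>] in fastforce)
  then show ?thesis
    by (simp add: lborel_pair.emeasure_pair_measure_alt2[OF subgraph_in_sets[OF \<phi>]] slice)
qed

lemma integral_inG_bounds:
  assumes \<phi>: "inG \<phi>"
  shows "-2 \<le> integral {-1..1} \<phi>" "integral {-1..1} \<phi> \<le> 2"
proof -
  have \<phi>_int: "\<phi> integrable_on {-1..1}"
    using \<phi> by (simp add: inG_def integrable_continuous_real)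
  have "integral {-1..1} (\<lambda>_::real. -1) \<le> integral {-1..1} \<phi>"
    by (rule integral_le) (use \<phi>_int inG_in_Icc[OF \<phi>] in auto)
  moreover have "integral {-1..1} \<phi> \<le> integral {-1..1} (\<lambda>_::real. 1)"
    by (rule integral_le) (use \<phi>_int inG_in_Icc[OF \<phi>] in auto)
  ultimately show "-2 \<le> integral {-1..1} \<phi>" "integral {-1..1} \<phi> \<le> 2"
    by simp_all
qed

lemma integral_plus_integral_ginv:
  assumes \<phi>: "inG \<phi>"
  shows "integral {-1..1} \<phi> + integral {-1..1} (ginv \<phi>) = 0"
proof -
  have "ennreal (integral {-1..1} \<phi> + 2) = ennreal (2 - integral {-1..1} (ginv \<phi>))"
    using emeasure_subgraph_eq_integral[OF \<phi>] emeasure_subgraph_eq_integral_ginv[OF \<phi>] by simp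
  moreover have "-2 \<le> integral {-1..1} \<phi>" "integral {-1..1} (ginv \<phi>) \<le> 2"
    using integral_inG_bounds \<phi> inG_ginv by blast+
  ultimately show ?thesis
    by simp
qed

lemma Q_antisym:
  assumes u: "inG u" and w: "inG w"
  shows "Q w u = - Q u w"
proof -
  define \<phi> where "\<phi> t = u (ginv w t)" for t
  have \<phi>: "inG \<phi>"
    unfolding \<phi>_def by (rule inG_compose[OF u inG_ginv[OF w]])
  have "ginv \<phi> t = w (ginv u t)" if "t \<in> {-1..1}" for t
  proof -
    have "\<phi> (w (ginv u t)) = t"
      using ginv_inG_cancel[OF w ginv_in_Icc[OF u that]] inG_ginv_cancel[OF u that]
      by (simp add: \<phi>_def)
    then show ?thesis
      by (metis \<phi> u w that ginv_in_Icc inG_in_Icc ginv_inG_cancel)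
  qed
  then have "integral {-1..1} (ginv \<phi>) = Q w u"
    unfolding Q_def by (intro integral_cong) auto
  moreover have "integral {-1..1} \<phi> = Q u w"
    unfolding Q_def \<phi>_def ..
  ultimately show ?thesis
    using integral_plus_integral_ginv[OF \<phi>] by simp
qed

lemma Q_linear_left:
  assumes u: "continuous_on {-1..1} u" and v: "continuous_on {-1..1} v" and w: "inG w"
  shows "Q (\<lambda>t. a * u t + b * v t) w = a * Q u w + b * Q v w"
proof -
  have integrable: "(\<lambda>t. f (ginv w t)) integrable_on {-1..1}"
    if "continuous_on {-1..1} f" for f :: "real \<Rightarrow> real"
  proof (rule integrable_continuous_real)
    show "continuous_on {-1..1} (\<lambda>t. f (ginv w t))"
      by (rule continuous_on_compose2[OF that])
        (use inG_ginv[OF w] ginv_in_Icc[OF w] in \<open>auto simp: inG_def\<close>)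
  qed
  have "(\<lambda>t. a * u (ginv w t)) integrable_on {-1..1}" "(\<lambda>t. b * v (ginv w t)) integrable_on {-1..1}"
    using integrable_on_cmult_left[OF integrable[OF u], of a]
      integrable_on_cmult_left[OF integrable[OF v], of b] by simp_all
  then show ?thesis
    by (simp add: Q_def integral_add)
qed

lemma Q_convex_comb_left:
  "inG u \<Longrightarrow> inG v \<Longrightarrow> inG w \<Longrightarrow> Q (convex_comb a u v) w = a * Q u w + (1 - a) * Q v w"
  unfolding convex_comb_def by (rule Q_linear_left) (simp_all add: inG_def)

lemma Q_convex_comb_right:
  assumes "inG u" "inG p" "inG q" "0 \<le> a" "a \<le> 1"
  shows "Q u (convex_comb a p q) = a * Q u p + (1 - a) * Q u q"
  using assms inG_convex_comb[OF assms(2-5)]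
  by (simp add: Q_antisym[of _ u] Q_convex_comb_left algebra_simps)

lemma Q_odd_odd:
  assumes g: "inG00 g" and k: "inG00 k"
  shows "Q g k = 0"
proof -
  have "ginv k (-t) = - ginv k t" if "t \<in> {-1..1}" for t
    using k that ginv_in_Icc[of k t] inG_ginv_cancel[of k t] ginv_inG_cancel[of k "- ginv k t"]
    by (auto simp: inG00_def)
  then show ?thesis
    unfolding Q_def using g k ginv_in_Icc[of k]
    by (intro integral_odd_function) (auto simp: inG00_def)
qed

lemma Q_convex_comb_convex_comb:
  assumes "inG u" "inG v" "inG p" "inG q" "0 \<le> a" "a \<le> 1"
  shows "Q (convex_comb b u v) (convex_comb a p q)
    = b * (a * Q u p + (1 - a) * Q u q) + (1 - b) * (a * Q v p + (1 - a) * Q v q)"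
  using assms by (simp add: Q_convex_comb_left Q_convex_comb_right inG_convex_comb)

lemma Q_convex_comb_pos:
  assumes "inG u" "inG p" "inG00 v" "inG00 q"
    and "0 < a" "a \<le> 1" "0 < b" "b \<le> 1"
    and "0 < Q u p" "0 \<le> Q u q" "0 \<le> Q v p"
  shows "0 < Q (convex_comb b u v) (convex_comb a p q)"
proof -
  have "inG v" "inG q" using assms(3,4) by (simp_all add: inG00_def)
  then have "Q (convex_comb b u v) (convex_comb a p q)
      = b * a * Q u p + b * (1 - a) * Q u q + (1 - b) * a * Q v p"
    using assms Q_odd_odd[OF assms(3,4)]
    by (simp add: Q_convex_comb_convex_comb algebra_simps)
  also have "\<dots> > 0"
    using assms by (intro add_pos_nonneg mult_pos_pos mult_nonneg_nonneg) auto
  finally show ?thesis .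
qed

lemma integral_inG00_eq_0: "inG00 g \<Longrightarrow> integral {-1..1} g = 0"
  by (rule integral_odd_function) (auto simp: inG00_def)

lemma inG0_convex_comb:
  assumes f: "inG0 f" and g: "inG00 g" and a: "0 \<le> a" "a \<le> 1"
  shows "inG0 (convex_comb a f g)"
proof -
  have "f integrable_on {-1..1}" "g integrable_on {-1..1}"
    using f g by (simp_all add: inG0_def inG00_def inG_def integrable_continuous_real)
  then have "integral {-1..1} (convex_comb a f g)
      = a * integral {-1..1} f + (1 - a) * integral {-1..1} g"
    by (simp add: convex_comb_def integral_add integrable_on_cmult_left[where 'b = real, simplified])
  also have "\<dots> = 0"
    using f integral_inG00_eq_0[OF g] by (simp add: inG0_def)
  finally show ?thesis
    using f g a inG_convex_comb by (simp add: inG0_def inG00_def)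
qed

lemma even_part_convex_comb:
  "inG00 g \<Longrightarrow> t \<in> {-1..1} \<Longrightarrow> even_part (convex_comb a f g) t = a * even_part f t"
  by (simp add: inG00_def even_part_def convex_comb_def algebra_simps)

lemma lin_indep_fam_rescale:
  assumes F: "lin_indep_fam n F" and c: "\<forall>i\<in>{1..n}. c i \<noteq> 0"
    and G: "\<forall>i\<in>{1..n}. \<forall>t\<in>{-1..1}. G i t = c i * F i t"
  shows "lin_indep_fam n G"
  unfolding lin_indep_fam_def
proof (intro allI impI ballI)
  fix d :: "nat \<Rightarrow> real" and k
  assume d: "\<forall>t\<in>{-1..1}. (\<Sum>i=1..n. d i * G i t) = 0" and k: "k \<in> {1..n}"
  have "(\<Sum>i=1..n. (d i * c i) * F i t) = (\<Sum>i=1..n. d i * G i t)" if "t \<in> {-1..1}" for t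
    by (rule sum.cong) (use G that in auto)
  then have "\<forall>t\<in>{-1..1}. (\<Sum>i=1..n. (d i * c i) * F i t) = 0"
    using d by simp
  then have "d k * c k = 0"
    using F[unfolded lin_indep_fam_def, rule_format, of "\<lambda>i. d i * c i", OF _ k] by simp
  then show "d k = 0"
    using c k by simp
qed

lemma total_on_subset_asym_eq:
  assumes total: "total_on A r" and asym: "asym s" and s: "s \<subseteq> A \<times> A" and rs: "r \<subseteq> s"
  shows "s = r"
proof (rule subset_antisym[OF _ rs], rule subrelI)
  fix x y assume xy: "(x, y) \<in> s"
  have yx: "(y, x) \<notin> s"
    using asymD[OF asym xy] .
  then have "x \<noteq> y" "x \<in> A" "y \<in> A"
    using xy s by auto
  then have "(x, y) \<in> r \<or> (y, x) \<in> r"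
    using total by (simp add: total_on_def)
  then show "(x, y) \<in> r"
    using yx rs by blast
qed

lemma Rel_subset_square: "Rel n f \<subseteq> {1..n} \<times> {1..n}"
  by (auto simp: Rel_def)

lemma asym_Rel:
  assumes "\<forall>i\<in>{1..n}. inG (f i)"
  shows "asym (Rel n f)"
proof
  fix i j assume "(i, j) \<in> Rel n f"
  then have ij: "i \<in> {1..n}" "j \<in> {1..n}" "0 < Q (f j) (f i)"
    by (simp_all add: Rel_def)
  moreover have "Q (f j) (f i) = - Q (f i) (f j)"
    by (rule Q_antisym) (use assms ij in auto)
  ultimately show "(j, i) \<notin> Rel n f"
    by (simp add: Rel_def)
qed

lemma total_on_Rel_iff:
  assumes "\<forall>i\<in>{1..n}. inG (f i)"
  shows "total_on {1..n} (Rel n f) \<longleftrightarrow> (\<forall>i\<in>{1..n}. \<forall>j\<in>{1..n}. i \<noteq> j \<longrightarrow> Q (f i) (f j) \<noteq> 0)"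
proof -
  have "Q (f i) (f j) \<noteq> 0 \<longleftrightarrow> (i, j) \<in> Rel n f \<or> (j, i) \<in> Rel n f"
    if ij: "i \<in> {1..n}" "j \<in> {1..n}" for i j
  proof -
    have "Q (f j) (f i) = - Q (f i) (f j)"
      by (rule Q_antisym) (use assms ij in auto)
    with ij show ?thesis
      by (auto simp: Rel_def)
  qed
  then show ?thesis
    unfolding total_on_def by blast
qed

lemma Rel_subset_Rel_convex_comb:
  assumes f: "\<forall>i\<in>{1..n}. inG (f i)" and g: "\<forall>i\<in>{1..n}. inG00 (g i)"
    and x: "\<forall>i\<in>{1..n}. 0 < x i \<and> x i \<le> 1"
    and arrows: "\<forall>(i, j)\<in>Rel n f. arrow (g i) (f j) \<and> arrow (f i) (g j)"
  shows "Rel n f \<subseteq> Rel n (\<lambda>i. convex_comb (x i) (f i) (g i))"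
proof (clarify)
  fix i j assume ij: "(i, j) \<in> Rel n f"
  then have ij_range: "i \<in> {1..n}" "j \<in> {1..n}" and "0 < Q (f j) (f i)"
    by (auto simp: Rel_def)
  moreover have "0 < Q (f j) (g i)" "0 < Q (g j) (f i)"
    using arrows ij by (auto simp: arrow_def)
  ultimately have "0 < Q (convex_comb (x j) (f j) (g j)) (convex_comb (x i) (f i) (g i))"
    using f g x by (intro Q_convex_comb_pos) (auto simp: less_imp_le)
  with ij_range show "(i, j) \<in> Rel n (\<lambda>i. convex_comb (x i) (f i) (g i))"
    by (simp add: Rel_def)
qed

lemma lin_indep_even_part_convex_comb:
  assumes "lin_indep_fam n (\<lambda>i. even_part (f i))" "\<forall>i\<in>{1..n}. inG00 (g i)"
    and "\<forall>i\<in>{1..n}. x i \<noteq> 0"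
  shows "lin_indep_fam n (\<lambda>i. even_part (convex_comb (x i) (f i) (g i)))"
  by (rule lin_indep_fam_rescale[OF assms(1,3)]) (simp add: assms(2) even_part_convex_comb)

theorem proposition4p17:
  fixes n :: nat and f g :: "nat \<Rightarrow> real \<Rightarrow> real" and x :: "nat \<Rightarrow> real"
    and R :: "(nat \<times> nat) set"
  assumes "strongly_generic n f"
    and "Rel n f = R"
    and "\<forall>i\<in>{1..n}. inG00 (g i)"
    and "\<forall>(i, j)\<in>R. arrow (g i) (f j) \<and> arrow (f i) (g j)"
    and "\<forall>i\<in>{1..n}. 0 < x i \<and> x i \<le> 1"
  shows "strongly_generic n (\<lambda>i t. x i * f i t + (1 - x i) * g i t)
         \<and> Rel n (\<lambda>i t. x i * f i t + (1 - x i) * g i t) = R"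
proof -
  define h where "h = (\<lambda>i. convex_comb (x i) (f i) (g i))"
  have fG: "\<forall>i\<in>{1..n}. inG (f i)"
    using assms(1) by (simp add: strongly_generic_def inG0_def)
  have hG0: "\<forall>i\<in>{1..n}. inG0 (h i)"
    using assms(1,3,5) by (simp add: h_def strongly_generic_def inG0_convex_comb less_imp_le)
  then have hG: "\<forall>i\<in>{1..n}. inG (h i)"
    by (simp add: inG0_def)
  have total: "total_on {1..n} (Rel n f)"
    using assms(1) unfolding strongly_generic_def total_on_Rel_iff[OF fG] by blast
  have "Rel n f \<subseteq> Rel n h"
    unfolding h_def using assms(2-5) fG by (intro Rel_subset_Rel_convex_comb) auto
  then have Rel_h: "Rel n h = Rel n f"
    using total hG by (intro total_on_subset_asym_eq[OF total] asym_Rel Rel_subset_square)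
  have "lin_indep_fam n (\<lambda>i. even_part (h i))"
    unfolding h_def using assms(1,3,5)
    by (intro lin_indep_even_part_convex_comb) (auto simp: strongly_generic_def)
  moreover have "\<forall>i\<in>{1..n}. \<forall>j\<in>{1..n}. i \<noteq> j \<longrightarrow> Q (h i) (h j) \<noteq> 0"
    using total unfolding Rel_h[symmetric] total_on_Rel_iff[OF hG] .
  ultimately have "strongly_generic n h"
    using hG0 unfolding strongly_generic_def by blast
  moreover have "(\<lambda>i t. x i * f i t + (1 - x i) * g i t) = h"
    by (simp add: h_def convex_comb_def fun_eq_iff)
  ultimately show ?thesis
    using Rel_h assms(2) by (simp only:)
qed

end
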